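(* Let $U\subset V\subset\mathbb R^2$ be compact star-shaped domains (origin in the interior) with smooth boundaries, and assume $V$ is convex. Then $\mathrm{sys}(\mathbb T^2\times\partial U)\le\mathrm{sys}(\mathbb T^2\times\partial V)$.
   Context: $\mathbb T^2=\mathbb R^2/\mathbb Z^2$, $T^*\mathbb T^2=\mathbb T^2\times\mathbb R^2$, $\lambda_{\rm can}=p_1dq_1+p_2dq_2$. For a compact star-shaped domain $A\subset\mathbb R^2$ with smooth boundary, $\mathrm{sys}(\mathbb T^2\times\partial A)$ is the minimal action (period) of a closed Reeb orbit of the contact form $\lambda_{\rm can}|_{\mathbb T^2\times\partial A}$. *)

theory Defs
  imports "HOL-Analysis.Analysis"
begin

text \<open>Points of R^2 are pairs of reals; the cotangent bundle T^*T^2 is lifted to its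
  universal cover R^2 x R^2 with coordinates (q, p), q = (q1,q2), p = (p1,p2).\<close>

primrec C_k :: "nat \<Rightarrow> ('a::real_normed_vector \<Rightarrow> real) \<Rightarrow> bool" where
  "C_k 0 f = continuous_on UNIV f"
| "C_k (Suc k) f = ((\<forall>x. f differentiable (at x)) \<and>
                     (\<forall>v. C_k k (\<lambda>x. frechet_derivative f (at x) v)))"

definition smooth_fun :: "('a::real_normed_vector \<Rightarrow> real) \<Rightarrow> bool" where
  "smooth_fun f \<longleftrightarrow> (\<forall>k. C_k k f)"

text \<open>Compact star-shaped domain (w.r.t. the origin, origin in the interior) with smooth
  boundary; the boundary is cut out by a smooth defining function H and is transverse to
  the radial vector field (so that the restricted Liouville form is contact).\<close>
definition star_shaped_smooth_domain :: "(real \<times> real) set \<Rightarrow> bool" where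
  "star_shaped_smooth_domain A \<longleftrightarrow>
     compact A \<and> (0::real\<times>real) \<in> interior A \<and>
     (\<forall>x\<in>A. closed_segment 0 x \<subseteq> A) \<and>
     (\<exists>H :: real \<times> real \<Rightarrow> real. smooth_fun H \<and> A = {p. H p \<le> 0} \<and>
        (\<forall>p. H p = 0 \<longrightarrow> frechet_derivative H (at p) p > 0))"

definition tangent_space :: "(real \<times> real) set \<Rightarrow> real \<times> real \<Rightarrow> (real \<times> real) set" where
  "tangent_space S p = {v. \<exists>c e. e > 0 \<and> c 0 = p \<and> (\<forall>t. \<bar>t\<bar> < e \<longrightarrow> c t \<in> S) \<and>
                               (c has_vector_derivative v) (at 0)}"

text \<open>A closed Reeb orbit of period T of lambda_can = p1 dq1 + p2 dq2 restricted to
  T^2 x frontier A, written as a curve gamma = (q,p) in the universal cover R^2 x R^2: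
  gamma stays on R^2 x frontier A, closes up modulo Z^2 x 0 after time T,
  lambda(gamma') = 1 and gamma' lies in the kernel of d lambda = dp1/\dq1 + dp2/\dq2
  restricted to the tangent space R^2 x T_p(frontier A).\<close>
definition closed_reeb_orbit ::
  "(real \<times> real) set \<Rightarrow> real \<Rightarrow> (real \<Rightarrow> (real \<times> real) \<times> (real \<times> real)) \<Rightarrow> bool" where
  "closed_reeb_orbit A T \<gamma> \<longleftrightarrow>
     T > 0 \<and>
     (\<forall>t. snd (\<gamma> t) \<in> frontier A) \<and>
     (\<forall>t. snd (\<gamma> (t + T)) = snd (\<gamma> t) \<and> fst (\<gamma> (t + T)) - fst (\<gamma> t) \<in> \<int> \<times> \<int>) \<and>
     (\<forall>t. \<exists>q' p'. (\<gamma> has_vector_derivative (q', p')) (at t) \<and>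
          inner (snd (\<gamma> t)) q' = 1 \<and>
          (\<forall>a b. b \<in> tangent_space (frontier A) (snd (\<gamma> t)) \<longrightarrow>
                 inner p' a - inner b q' = 0))"

definition sys :: "(real \<times> real) set \<Rightarrow> real" where
  "sys A = Inf {T. \<exists>\<gamma>. closed_reeb_orbit A T \<gamma>}"

end

theory Submission
  imports Defs
begin

text \<open>Along a closed Reeb orbit \<open>(q, p)\<close> of \<open>T\<^sup>2 \<times> \<partial>A\<close> the momentum \<open>p\<close> is a constant
  \<open>p\<^sub>0 \<in> \<partial>A\<close>, and the velocity \<open>q'\<close> is conormal to \<open>\<partial>A\<close> at \<open>p\<^sub>0\<close> with
  \<open>\<langle>p\<^sub>0, q'\<rangle> = 1\<close>; the orbit closes after a displacement \<open>k \<in> \<int>\<^sup>2 - {0}\<close>.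
  Conversely, for every such \<open>k\<close> a maximiser \<open>u\<close> of \<open>\<langle>-, k\<rangle>\<close> on \<open>A\<close> yields a
  closed orbit with \<open>q' = k / \<langle>u, k\<rangle>\<close> of period \<open>h\<^sub>A(k) = \<langle>u, k\<rangle>\<close>.
  If \<open>V\<close> is convex, the conormal \<open>q'\<close> is a positive multiple of the outer normal of a
  supporting line, so \<open>\<langle>v, q'\<rangle> \<le> 1\<close> on \<open>V\<close>, and the mean value theorem gives
  \<open>h\<^sub>V(k) \<le> T\<close> for every period \<open>T\<close> of \<open>V\<close>. Since \<open>h\<^sub>U(k) \<le> h\<^sub>V(k)\<close> is a period of
  \<open>U\<close>, every period of \<open>V\<close> dominates one of \<open>U\<close>.\<close>

lemma smooth_fun_differentiable:
  assumes "smooth_fun H"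
  shows "H differentiable (at x)"
  using assms unfolding smooth_fun_def by (metis C_k.simps(2))

lemma smooth_fun_continuous:
  assumes "smooth_fun H"
  shows "continuous_on UNIV H"
  using assms unfolding smooth_fun_def by (metis C_k.simps(1))

lemma frontier_sublevel_set_eq_zero:
  fixes H :: "'a::real_normed_vector \<Rightarrow> real"
  assumes "continuous_on UNIV H" and "p \<in> frontier {x. H x \<le> 0}"
  shows "H p = 0"
proof -
  have "closed {x. H x \<le> 0}" by (intro closed_Collect_le assms(1) continuous_on_const)
  then have "H p \<le> 0" using assms(2) frontier_subset_closed by blast
  moreover have "{x. H x < 0} \<subseteq> interior {x. H x \<le> 0}"
    by (intro interior_maximal open_Collect_less assms(1) continuous_on_const) auto
  ultimately show ?thesis using assms(2) by (force simp: frontier_def)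
qed

lemma convex_sublevel_set_derivative_le:
  fixes H :: "'a::real_normed_vector \<Rightarrow> real"
  assumes cvx: "convex {x. H x \<le> 0}" and "H p = 0" and dH: "(H has_derivative D) (at p)"
    and "H v \<le> 0"
  shows "D v \<le> D p"
proof (rule ccontr)
  assume "\<not> D v \<le> D p"
  moreover have lin: "linear D" using dH has_derivative_linear by blast
  ultimately have pos: "D (v - p) > 0" by (simp add: linear_diff)
  have "((\<lambda>s. H (p + s *\<^sub>R (v - p))) has_derivative (\<lambda>s. D (s *\<^sub>R (v - p)))) (at 0)"
    by (rule has_derivative_compose[where f="\<lambda>s. p + s *\<^sub>R (v - p)"])
       (auto intro!: derivative_eq_intros simp: dH)
  then have "((\<lambda>s. H (p + s *\<^sub>R (v - p))) has_real_derivative D (v - p)) (at 0)"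
    using lin by (simp add: has_field_derivative_def linear_scale mult_commute_abs)
  from DERIV_pos_inc_right[OF this pos] obtain d where "d > 0"
    and inc: "\<And>h. 0 < h \<Longrightarrow> h < d \<Longrightarrow> H p < H (p + h *\<^sub>R (v - p))" by auto
  define h where "h = min (d/2) 1"
  have h: "0 < h" "h < d" "h \<le> 1" using \<open>d > 0\<close> by (auto simp: h_def)
  have "p + h *\<^sub>R (v - p) = (1 - h) *\<^sub>R p + h *\<^sub>R v" by (simp add: algebra_simps)
  also have "\<dots> \<in> {x. H x \<le> 0}" using cvx assms h by (intro convexD) auto
  finally show False using inc[OF h(1,2)] \<open>H p = 0\<close> by simp
qed

definition radial_extent :: "'a::real_normed_vector set \<Rightarrow> 'a \<Rightarrow> real" where
  "radial_extent A x = Sup {s. 0 \<le> s \<and> s *\<^sub>R x \<in> A}"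

lemma bdd_above_radial_set:
  fixes A :: "'a::real_normed_vector set"
  assumes "bounded A" and "x \<noteq> 0"
  shows "bdd_above {s. 0 \<le> s \<and> s *\<^sub>R x \<in> A}"
proof -
  obtain B where B: "\<And>y. y \<in> A \<Longrightarrow> norm y \<le> B" using assms(1) bounded_iff by blast
  have "s \<le> B / norm x" if "0 \<le> s" "s *\<^sub>R x \<in> A" for s
    using B[OF that(2)] that(1) assms(2) by (simp add: field_simps)
  then show ?thesis by (intro bdd_aboveI) blast
qed

lemma radial_extent_ge:
  assumes "bounded A" and "x \<noteq> 0" and "0 \<le> s" and "s *\<^sub>R x \<in> A"
  shows "s \<le> radial_extent A x"
  unfolding radial_extent_def using assms by (intro cSup_upper bdd_above_radial_set) auto

lemma radial_extent_in_frontier: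
  fixes A :: "'a::real_normed_vector set"
  assumes "compact A" and "0 \<in> A" and "x \<noteq> 0"
  shows "radial_extent A x *\<^sub>R x \<in> frontier A"
proof -
  let ?S = "{s. 0 \<le> s \<and> s *\<^sub>R x \<in> A}"
  have "?S = {0..} \<inter> (\<lambda>s. s *\<^sub>R x) -` A" by auto
  then have "closed ?S"
    using compact_imp_closed[OF assms(1)]
    by (simp add: closed_Int closed_vimage continuous_on_scaleR)
  moreover have "?S \<noteq> {}" using assms(2) by auto
  ultimately have "radial_extent A x \<in> ?S"
    unfolding radial_extent_def
    using assms by (intro closed_contains_Sup bdd_above_radial_set compact_imp_bounded)
  moreover have "radial_extent A x *\<^sub>R x \<notin> interior A"
  proof
    assume "radial_extent A x *\<^sub>R x \<in> interior A"
    then obtain e where "e > 0" and e: "cball (radial_extent A x *\<^sub>R x) e \<subseteq> A"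
      using mem_interior_cball by blast
    have "(radial_extent A x + e / norm x) *\<^sub>R x \<in> A"
      using e \<open>e > 0\<close> assms(3) by (auto simp: dist_norm algebra_simps intro!: subsetD[OF e])
    then have "radial_extent A x + e / norm x \<le> radial_extent A x"
      using \<open>radial_extent A x \<in> ?S\<close> \<open>e > 0\<close> assms
      by (intro radial_extent_ge compact_imp_bounded) auto
    then show False using \<open>e > 0\<close> assms(3) by (smt (verit) divide_pos_pos zero_less_norm_iff)
  qed
  ultimately show ?thesis
    using assms(1) by (simp add: frontier_def compact_imp_closed)
qed

lemma sublevel_set_cone_along_kernel_pos:
  fixes H :: "'a::real_normed_vector \<Rightarrow> real"
  assumes dH: "(H has_derivative D) (at p)" and "H p = 0" and "D p > 0" and "D w = 0"
    and "\<epsilon> > 0"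
  obtains \<delta> where "\<delta> > 0" "\<And>y. 0 < y \<Longrightarrow> y < \<delta> \<Longrightarrow> H ((1 - \<epsilon> * y) *\<^sub>R (p + y *\<^sub>R w)) < 0"
proof -
  have lin: "linear D" using dH has_derivative_linear by blast
  let ?c = "\<lambda>y. (1 - \<epsilon> * y) *\<^sub>R (p + y *\<^sub>R w)"
  have "(?c has_derivative (\<lambda>y. y *\<^sub>R (w - \<epsilon> *\<^sub>R p))) (at 0)"
    by (auto intro!: derivative_eq_intros simp: algebra_simps)
  moreover have "(H has_derivative D) (at (?c 0))" using dH by simp
  ultimately have "((\<lambda>y. H (?c y)) has_derivative (\<lambda>y. D (y *\<^sub>R (w - \<epsilon> *\<^sub>R p)))) (at 0)"
    by (rule has_derivative_compose)
  moreover have "(\<lambda>y. D (y *\<^sub>R (w - \<epsilon> *\<^sub>R p))) = (*) (- \<epsilon> * D p)"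
    using lin \<open>D w = 0\<close> by (auto simp: linear_scale linear_diff)
  ultimately have "((\<lambda>y. H (?c y)) has_real_derivative - \<epsilon> * D p) (at 0)"
    by (simp add: has_field_derivative_def)
  from DERIV_neg_dec_right[OF this] obtain \<delta> where "\<delta> > 0"
    and "\<forall>y>0. y < \<delta> \<longrightarrow> H ((1 - \<epsilon> * y) *\<^sub>R (p + y *\<^sub>R w)) < 0"
    using assms by auto
  then show ?thesis using that by blast
qed

lemma sublevel_set_cone_along_kernel:
  fixes H :: "'a::real_normed_vector \<Rightarrow> real"
  assumes dH: "(H has_derivative D) (at p)" and "H p = 0" and "D p > 0" and "D w = 0"
    and "\<epsilon> > 0"
  obtains \<delta> where "\<delta> > 0" "\<And>t. \<bar>t\<bar> < \<delta> \<Longrightarrow> \<epsilon> * \<bar>t\<bar> < 1"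
    "\<And>t. \<bar>t\<bar> < \<delta> \<Longrightarrow> H ((1 - \<epsilon> * \<bar>t\<bar>) *\<^sub>R (p + t *\<^sub>R w)) \<le> 0"
proof -
  obtain \<delta>1 where "\<delta>1 > 0"
    and right: "\<And>y. 0 < y \<Longrightarrow> y < \<delta>1 \<Longrightarrow> H ((1 - \<epsilon> * y) *\<^sub>R (p + y *\<^sub>R w)) < 0"
    using sublevel_set_cone_along_kernel_pos[OF assms] by blast
  have "D (- w) = 0" using dH has_derivative_linear \<open>D w = 0\<close> by (fastforce simp: linear_neg)
  then obtain \<delta>2 where "\<delta>2 > 0"
    and left: "\<And>y. 0 < y \<Longrightarrow> y < \<delta>2 \<Longrightarrow> H ((1 - \<epsilon> * y) *\<^sub>R (p + y *\<^sub>R - w)) < 0"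
    using sublevel_set_cone_along_kernel_pos[OF dH \<open>H p = 0\<close> \<open>D p > 0\<close> _ \<open>\<epsilon> > 0\<close>] by blast
  define \<delta> where "\<delta> = min (min \<delta>1 \<delta>2) (1 / \<epsilon>)"
  show ?thesis
  proof (rule that[of \<delta>])
    show "\<delta> > 0" using \<open>\<delta>1 > 0\<close> \<open>\<delta>2 > 0\<close> \<open>\<epsilon> > 0\<close> by (simp add: \<delta>_def)
    show "\<epsilon> * \<bar>t\<bar> < 1" if "\<bar>t\<bar> < \<delta>" for t
      using that \<open>\<epsilon> > 0\<close> by (simp add: \<delta>_def field_simps)
    show "H ((1 - \<epsilon> * \<bar>t\<bar>) *\<^sub>R (p + t *\<^sub>R w)) \<le> 0" if "\<bar>t\<bar> < \<delta>" for t
      using right[of t] left[of "- t"] that \<open>H p = 0\<close>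
      by (cases t "0::real" rule: linorder_cases) (auto simp: \<delta>_def)
  qed
qed

lemma has_real_derivative_zero_at_squeezed_max:
  fixes f :: "real \<Rightarrow> real"
  assumes max: "\<And>y. f y \<le> f 0"
    and lower: "\<And>\<epsilon>. \<epsilon> > 0 \<Longrightarrow> \<exists>\<delta>>0. \<forall>y. \<bar>y\<bar> < \<delta> \<longrightarrow> f 0 - \<epsilon> * \<bar>y\<bar> \<le> f y"
  shows "(f has_real_derivative 0) (at 0)"
  unfolding has_field_derivative_iff LIM_eq
proof (intro allI impI)
  fix r :: real assume "r > 0"
  then obtain \<delta> where "\<delta> > 0" and \<delta>: "\<And>y. \<bar>y\<bar> < \<delta> \<Longrightarrow> f 0 - (r/2) * \<bar>y\<bar> \<le> f y"
    using lower[of "r/2"] by auto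
  have "\<bar>(f y - f 0) / y\<bar> < r" if "y \<noteq> 0" "\<bar>y\<bar> < \<delta>" for y
  proof -
    have "\<bar>f y - f 0\<bar> \<le> (r/2) * \<bar>y\<bar>" using max[of y] \<delta>[OF that(2)] by linarith
    then have "\<bar>f y - f 0\<bar> / \<bar>y\<bar> \<le> r/2" using that(1) by (simp add: pos_divide_le_eq)
    then show ?thesis using \<open>r > 0\<close> unfolding abs_divide by linarith
  qed
  then show "\<exists>s>0. \<forall>y. y \<noteq> 0 \<and> norm (y - 0) < s \<longrightarrow> norm ((f y - f 0) / (y - 0) - 0) < r"
    using \<open>\<delta> > 0\<close> by auto
qed

(* The curve realising w is the radial projection of the line p + t w onto the frontier.
   Its scale factor is at most 1 because A lies below the supporting line D = D p, and at
   least 1 - \<epsilon>|t| near 0 because H is negative on the cone through p; so it is flat at 0. *)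
lemma kernel_subset_tangent_space:
  fixes H :: "real \<times> real \<Rightarrow> real"
  assumes A: "compact A" "0 \<in> A" "A = {x. H x \<le> 0}"
    and dH: "(H has_derivative D) (at p)" and "H p = 0" and "D p > 0"
    and supp: "\<And>v. v \<in> A \<Longrightarrow> D v \<le> D p"
    and "D w = 0"
  shows "w \<in> tangent_space (frontier A) p"
proof -
  have lin: "linear D" using dH has_derivative_linear by blast
  define \<rho> where "\<rho> t = radial_extent A (p + t *\<^sub>R w)" for t
  have D_line: "D (p + t *\<^sub>R w) = D p" for t
    using lin \<open>D w = 0\<close> by (simp add: linear_add linear_scale)
  have line_nz: "p + t *\<^sub>R w \<noteq> 0" for t
    using D_line[of t] \<open>D p > 0\<close> linear_0[OF lin] by force
  have on_frontier: "\<rho> t *\<^sub>R (p + t *\<^sub>R w) \<in> frontier A" for t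
    unfolding \<rho>_def by (rule radial_extent_in_frontier[OF A(1,2) line_nz])
  have \<rho>_le: "\<rho> t \<le> 1" for t
  proof -
    have "\<rho> t *\<^sub>R (p + t *\<^sub>R w) \<in> A"
      using on_frontier frontier_subset_closed compact_imp_closed[OF A(1)] by blast
    then have "\<rho> t * D p \<le> 1 * D p"
      using supp lin D_line by (fastforce simp: linear_scale)
    then show ?thesis using \<open>D p > 0\<close> by simp
  qed
  have ge: "s \<le> \<rho> t" if "0 \<le> s" "H (s *\<^sub>R (p + t *\<^sub>R w)) \<le> 0" for s t
    unfolding \<rho>_def using that A line_nz by (intro radial_extent_ge compact_imp_bounded) auto
  have \<rho>0: "\<rho> 0 = 1"
    using \<rho>_le[of 0] ge[of 1 0] \<open>H p = 0\<close> by simp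
  have lower: "\<exists>\<delta>>0. \<forall>t. \<bar>t\<bar> < \<delta> \<longrightarrow> \<rho> 0 - \<epsilon> * \<bar>t\<bar> \<le> \<rho> t" if "\<epsilon> > 0" for \<epsilon>
  proof -
    obtain \<delta> where "\<delta> > 0" and small: "\<And>t. \<bar>t\<bar> < \<delta> \<Longrightarrow> \<epsilon> * \<bar>t\<bar> < 1"
      and cone: "\<And>t. \<bar>t\<bar> < \<delta> \<Longrightarrow> H ((1 - \<epsilon> * \<bar>t\<bar>) *\<^sub>R (p + t *\<^sub>R w)) \<le> 0"
      using sublevel_set_cone_along_kernel[OF dH \<open>H p = 0\<close> \<open>D p > 0\<close> \<open>D w = 0\<close> \<open>\<epsilon> > 0\<close>] by blast
    have "1 - \<epsilon> * \<bar>t\<bar> \<le> \<rho> t" if "\<bar>t\<bar> < \<delta>" for t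
      using ge[OF _ cone[OF that]] small[OF that] by simp
    then show ?thesis using \<open>\<delta> > 0\<close> \<rho>0 by auto
  qed
  have "(\<rho> has_real_derivative 0) (at 0)"
    using \<rho>_le \<rho>0 lower by (intro has_real_derivative_zero_at_squeezed_max) auto
  then have "((\<lambda>t. \<rho> t *\<^sub>R (p + t *\<^sub>R w)) has_vector_derivative w) (at 0)"
    using \<rho>0 by (auto intro!: derivative_eq_intros)
  then show ?thesis
    unfolding tangent_space_def using \<rho>0 on_frontier
    by (intro CollectI exI[of _ "\<lambda>t. \<rho> t *\<^sub>R (p + t *\<^sub>R w)"] exI[of _ 1]) auto
qed

lemma inner_eq_ratio_if_orthogonal_to_kernel:
  fixes D :: "'a::real_inner \<Rightarrow> real"
  assumes "linear D" and "D p \<noteq> 0" and "inner p q = 1"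
    and orth: "\<And>w. D w = 0 \<Longrightarrow> inner w q = 0"
  shows "inner v q = D v / D p"
proof -
  have "D (v - (D v / D p) *\<^sub>R p) = 0"
    using assms(1,2) by (simp add: linear_diff linear_scale)
  then have "inner (v - (D v / D p) *\<^sub>R p) q = 0" by (rule orth)
  then show ?thesis using assms(3) by (simp add: inner_diff_left)
qed

lemma has_vector_derivative_components:
  assumes "(g has_vector_derivative (a, b)) F"
  shows "((\<lambda>t. fst (g t)) has_vector_derivative a) F"
    and "((\<lambda>t. snd (g t)) has_vector_derivative b) F"
  using has_derivative_fst[OF assms[unfolded has_vector_derivative_def]]
    has_derivative_snd[OF assms[unfolded has_vector_derivative_def]]
  by (simp_all add: has_vector_derivative_def)

lemma has_real_derivative_inner_right:
  assumes "(q has_vector_derivative q') F"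
  shows "((\<lambda>t. inner v (q t)) has_real_derivative inner v q') F"
  using has_derivative_inner_right[OF assms[unfolded has_vector_derivative_def], of v]
  by (simp add: has_field_derivative_def mult_commute_abs)

lemma closed_reeb_orbit_constant_momentum:
  assumes "closed_reeb_orbit A T \<gamma>"
  obtains p q' where "p \<in> frontier A" "\<And>t. snd (\<gamma> t) = p"
    "\<And>t. ((\<lambda>t. fst (\<gamma> t)) has_vector_derivative q' t) (at t)"
    "\<And>t. inner p (q' t) = 1"
    "\<And>t b. b \<in> tangent_space (frontier A) p \<Longrightarrow> inner b (q' t) = 0"
proof -
  obtain q' p' where der: "\<And>t. (\<gamma> has_vector_derivative (q' t, p' t)) (at t)"
    and action: "\<And>t. inner (snd (\<gamma> t)) (q' t) = 1"
    and kernel: "\<And>t a b. b \<in> tangent_space (frontier A) (snd (\<gamma> t)) \<Longrightarrow>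
                  inner (p' t) a - inner b (q' t) = 0"
    using assms unfolding closed_reeb_orbit_def by metis
  have on_frontier: "snd (\<gamma> t) \<in> frontier A" for t
    using assms unfolding closed_reeb_orbit_def by blast
  have "0 \<in> tangent_space S x" if "x \<in> S" for S x
    unfolding tangent_space_def using that by (intro CollectI exI[of _ "\<lambda>_. x"] exI[of _ 1]) auto
  \<comment> \<open>the kernel condition with \<open>b = 0\<close> says \<open>p'\<close> is orthogonal to everything\<close>
  then have "inner (p' t) (p' t) = 0" for t
    using kernel[of 0 t "p' t"] on_frontier by simp
  then have "((\<lambda>t. snd (\<gamma> t)) has_vector_derivative 0) (at t)" for t
    using has_vector_derivative_components(2)[OF der[of t]] by simp
  then obtain p where p: "\<And>t. snd (\<gamma> t) = p"
    using has_vector_derivative_zero_constant[of UNIV "\<lambda>t. snd (\<gamma> t)"] by auto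
  show ?thesis
  proof (rule that[of p q'])
    show "p \<in> frontier A" using on_frontier p by metis
    show "((\<lambda>t. fst (\<gamma> t)) has_vector_derivative q' t) (at t)" for t
      using has_vector_derivative_components(1)[OF der[of t]] .
    show "inner b (q' t) = 0" if "b \<in> tangent_space (frontier A) p" for t b
      using kernel[of b t 0] p that by simp
  qed (use action p in auto)
qed

lemma inner_increment_mean_value:
  fixes q :: "real \<Rightarrow> 'a::real_inner"
  assumes "\<And>t. (q has_vector_derivative q' t) (at t)" and "T > 0"
  obtains \<xi> where "0 < \<xi>" "\<xi> < T" "inner v (q T - q 0) = T * inner v (q' \<xi>)"
proof -
  have "((\<lambda>t. inner v (q t)) has_real_derivative inner v (q' t)) (at t)" for t
    using assms(1) by (rule has_real_derivative_inner_right)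
  then obtain \<xi> where "0 < \<xi>" "\<xi> < T"
    and "inner v (q T) - inner v (q 0) = (T - 0) * inner v (q' \<xi>)"
    using MVT2[OF \<open>T > 0\<close>, of "\<lambda>t. inner v (q t)" "\<lambda>t. inner v (q' t)"] by blast
  then show ?thesis using that by (simp add: inner_diff_right)
qed

lemma convex_conormal_inner_le_one:
  assumes "star_shaped_smooth_domain V" and "convex V" and "p \<in> frontier V"
    and action: "inner p q = 1"
    and conormal: "\<And>b. b \<in> tangent_space (frontier V) p \<Longrightarrow> inner b q = 0"
    and "v \<in> V"
  shows "inner v q \<le> 1"
proof -
  obtain H where V: "compact V" "0 \<in> interior V" "V = {x. H x \<le> 0}" and "smooth_fun H"
    and transversal: "\<And>x. H x = 0 \<Longrightarrow> frechet_derivative H (at x) x > 0"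
    using assms(1) unfolding star_shaped_smooth_domain_def by blast
  define D where "D = frechet_derivative H (at p)"
  have dH: "(H has_derivative D) (at p)"
    unfolding D_def using smooth_fun_differentiable[OF \<open>smooth_fun H\<close>] frechet_derivative_works
    by blast
  have "H p = 0"
    using smooth_fun_continuous[OF \<open>smooth_fun H\<close>] \<open>p \<in> frontier V\<close> V(3)
    by (intro frontier_sublevel_set_eq_zero) auto
  then have "D p > 0" using transversal D_def by blast
  have supp: "D x \<le> D p" if "x \<in> V" for x
    using convex_sublevel_set_derivative_le[OF _ \<open>H p = 0\<close> dH] assms(2) V(3) that by auto
  have "0 \<in> V" using V(2) interior_subset by blast
  have "w \<in> tangent_space (frontier V) p" if "D w = 0" for w
    using kernel_subset_tangent_space[OF V(1) \<open>0 \<in> V\<close> V(3) dH \<open>H p = 0\<close> \<open>D p > 0\<close> supp that]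
    by blast
  then have "inner v q = D v / D p"
    using inner_eq_ratio_if_orthogonal_to_kernel[OF has_derivative_linear[OF dH] _ action]
      \<open>D p > 0\<close> conormal by simp
  then show ?thesis using supp[OF \<open>v \<in> V\<close>] \<open>D p > 0\<close> by simp
qed

lemma convex_closed_reeb_orbit_period_ge_support:
  assumes "star_shaped_smooth_domain V" and "convex V" and orbit: "closed_reeb_orbit V T \<gamma>"
  obtains k where "k \<in> \<int> \<times> \<int>" "k \<noteq> 0" "\<And>v. v \<in> V \<Longrightarrow> inner v k \<le> T"
proof -
  have "T > 0" and closing: "fst (\<gamma> (0 + T)) - fst (\<gamma> 0) \<in> \<int> \<times> \<int>"
    using orbit unfolding closed_reeb_orbit_def by blast+
  obtain p q' where "p \<in> frontier V"
    and dq: "\<And>t. ((\<lambda>t. fst (\<gamma> t)) has_vector_derivative q' t) (at t)"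
    and action: "\<And>t. inner p (q' t) = 1"
    and conormal: "\<And>t b. b \<in> tangent_space (frontier V) p \<Longrightarrow> inner b (q' t) = 0"
    using closed_reeb_orbit_constant_momentum[OF orbit] by metis
  define k where "k = fst (\<gamma> T) - fst (\<gamma> 0)"
  have bound: "inner v k \<le> T" if "v \<in> V" for v
  proof -
    obtain \<xi> where "inner v k = T * inner v (q' \<xi>)"
      using inner_increment_mean_value[OF dq \<open>T > 0\<close>] k_def by metis
    moreover have "inner v (q' \<xi>) \<le> 1"
      using convex_conormal_inner_le_one[OF assms(1,2) \<open>p \<in> frontier V\<close> action conormal that] .
    ultimately show ?thesis using \<open>T > 0\<close> by (simp add: mult_left_le)
  qed
  obtain \<xi> where "inner p k = T * inner p (q' \<xi>)"
    using inner_increment_mean_value[OF dq \<open>T > 0\<close>] k_def by metis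
  then have "inner p k = T" using action by simp
  then have "k \<noteq> 0" using \<open>T > 0\<close> by auto
  then show ?thesis using that closing bound k_def by simp
qed

lemma inner_lt_if_interior:
  fixes k :: "'a::real_inner"
  assumes "x \<in> interior A" and "k \<noteq> 0" and "\<And>v. v \<in> A \<Longrightarrow> inner v k \<le> M"
  shows "inner x k < M"
proof -
  obtain e where "e > 0" and "cball x e \<subseteq> A" using assms(1) mem_interior_cball by blast
  then have "x + (e / norm k) *\<^sub>R k \<in> A" by (auto simp: dist_norm)
  moreover have "inner (x + (e / norm k) *\<^sub>R k) k = inner x k + e * norm k"
    using \<open>k \<noteq> 0\<close> by (simp add: inner_add_left dot_square_norm power2_eq_square)
  ultimately have "inner x k + e * norm k \<le> M" using assms(3) by metis
  then show ?thesis using \<open>e > 0\<close> \<open>k \<noteq> 0\<close> by (smt (verit) mult_pos_pos zero_less_norm_iff)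
qed

lemma tangent_space_orthogonal_at_maximizer:
  assumes "closed A" and max: "\<And>v. v \<in> A \<Longrightarrow> inner v k \<le> inner u k"
    and "b \<in> tangent_space (frontier A) u"
  shows "inner b k = 0"
proof -
  obtain c e where "e > 0" "c 0 = u" and c: "\<And>t. \<bar>t\<bar> < e \<Longrightarrow> c t \<in> frontier A"
    and dc: "(c has_vector_derivative b) (at 0)"
    using assms(3) unfolding tangent_space_def by blast
  have "inner k (c t) \<le> inner k (c 0)" if "\<bar>0 - t\<bar> < e" for t
  proof -
    have "c t \<in> A" using c[of t] that frontier_subset_closed[OF assms(1)] by auto
    then show ?thesis using max[of "c t"] \<open>c 0 = u\<close> by (simp add: inner_commute)
  qed
  then have "inner k b = 0"
    using DERIV_local_max[OF has_real_derivative_inner_right[OF dc] \<open>e > 0\<close>] by blast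
  then show ?thesis by (simp add: inner_commute)
qed

lemma closed_reeb_orbit_at_maximizer:
  assumes "closed A" and "0 \<in> interior A" and "k \<in> \<int> \<times> \<int>" and "k \<noteq> 0" and "u \<in> A"
    and max: "\<And>v. v \<in> A \<Longrightarrow> inner v k \<le> inner u k"
  shows "closed_reeb_orbit A (inner u k) (\<lambda>t. ((t / inner u k) *\<^sub>R k, u))"
proof -
  let ?c = "inner u k"
  have "?c > 0" using inner_lt_if_interior[OF assms(2,4) max] by (simp only: inner_zero_left)
  have "u \<in> frontier A"
    using inner_lt_if_interior[OF _ assms(4) max, of u] assms(1,5) by (auto simp: frontier_def)
  have orth: "inner b k = 0" if "b \<in> tangent_space (frontier A) u" for b
    using tangent_space_orthogonal_at_maximizer[OF assms(1) max that] .
  show ?thesis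
    unfolding closed_reeb_orbit_def
  proof (intro conjI allI)
    fix t
    have "((t + ?c) / ?c) *\<^sub>R k - (t / ?c) *\<^sub>R k = ((t + ?c) / ?c - t / ?c) *\<^sub>R k"
      by (simp add: scaleR_diff_left)
    also have "(t + ?c) / ?c - t / ?c = 1" using \<open>?c > 0\<close> by (simp add: field_simps)
    finally show "fst ((\<lambda>t. ((t / ?c) *\<^sub>R k, u)) (t + ?c)) - fst ((\<lambda>t. ((t / ?c) *\<^sub>R k, u)) t)
        \<in> \<int> \<times> \<int>"
      using assms(3) by simp
    have "((\<lambda>t. ((t / ?c) *\<^sub>R k, u)) has_vector_derivative ((1 / ?c) *\<^sub>R k, 0)) (at t)"
      using \<open>?c > 0\<close> by (auto intro!: derivative_eq_intros)
    then show "\<exists>q' p'. ((\<lambda>t. ((t / ?c) *\<^sub>R k, u)) has_vector_derivative (q', p')) (at t) \<and>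
        inner (snd ((\<lambda>t. ((t / ?c) *\<^sub>R k, u)) t)) q' = 1 \<and>
        (\<forall>a b. b \<in> tangent_space (frontier A) (snd ((\<lambda>t. ((t / ?c) *\<^sub>R k, u)) t)) \<longrightarrow>
               inner p' a - inner b q' = 0)"
      using \<open>?c > 0\<close> orth by (intro exI[of _ "(1 / ?c) *\<^sub>R k"] exI[of _ 0]) auto
  qed (use \<open>?c > 0\<close> \<open>u \<in> frontier A\<close> in auto)
qed

lemma closed_reeb_orbit_exists:
  assumes "compact A" and "0 \<in> interior A" and "k \<in> \<int> \<times> \<int>" and "k \<noteq> 0"
  obtains u \<gamma> where "u \<in> A" "closed_reeb_orbit A (inner u k) \<gamma>"
proof -
  have "A \<noteq> {}" using assms(2) interior_subset by blast
  then obtain u where "u \<in> A" and "\<And>v. v \<in> A \<Longrightarrow> inner v k \<le> inner u k"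
    using continuous_attains_sup[OF assms(1), of "\<lambda>v. inner v k"] continuous_on_inner
      continuous_on_id continuous_on_const by blast
  then show ?thesis
    using that closed_reeb_orbit_at_maximizer[OF compact_imp_closed[OF assms(1)] assms(2-4)]
    by blast
qed

theorem propositionA1:
  fixes U V :: "(real \<times> real) set"
  assumes "star_shaped_smooth_domain U"
    and "star_shaped_smooth_domain V"
    and "U \<subseteq> V"
    and "convex V"
  shows "sys U \<le> sys V"
  unfolding sys_def
proof (rule cInf_mono)
  have U: "compact U" "0 \<in> interior U" and V: "compact V" "0 \<in> interior V"
    using assms(1,2) unfolding star_shaped_smooth_domain_def by blast+
  have "(1, 0) \<in> \<int> \<times> (\<int> :: real set)" "(1, 0) \<noteq> (0 :: real \<times> real)"
    by (auto simp: zero_prod_def)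
  then show "{T. \<exists>\<gamma>. closed_reeb_orbit V T \<gamma>} \<noteq> {}"
    using closed_reeb_orbit_exists[OF V] by blast
  show "bdd_below {T. \<exists>\<gamma>. closed_reeb_orbit U T \<gamma>}"
    by (rule bdd_belowI[of _ 0]) (auto simp: closed_reeb_orbit_def)
  fix T assume "T \<in> {T. \<exists>\<gamma>. closed_reeb_orbit V T \<gamma>}"
  then obtain k where "k \<in> \<int> \<times> \<int>" "k \<noteq> 0" and support: "\<And>v. v \<in> V \<Longrightarrow> inner v k \<le> T"
    using convex_closed_reeb_orbit_period_ge_support[OF assms(2,4)] by blast
  then obtain u \<gamma> where "u \<in> U" "closed_reeb_orbit U (inner u k) \<gamma>"
    using closed_reeb_orbit_exists[OF U] by blast
  then show "\<exists>S \<in> {T. \<exists>\<gamma>. closed_reeb_orbit U T \<gamma>}. S \<le> T"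
    using support assms(3) by blast
qed

end
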